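(* Let $X$ and $\varepsilon$ be independent real random variables and $Y=X+\varepsilon$. Suppose $P(X\in\{\xi_\ell\}_{\ell\in\mathbb{N}_0})=1$ for real numbers $\xi_0<\xi_1<\xi_2<\cdots$, and $F_X\{\xi_0\}>0$. Suppose $\varepsilon$ is purely discrete with (countable) set of atoms $\mathbb{T}_\varepsilon$, and there exists $z_0\in\mathbb{T}_\varepsilon$ with $F_\varepsilon(z_0-)=0$. Define $p_X(\ell):=F_X\{\xi_\ell\}\mathbf 1_{\mathbb{N}_0}(\ell)$, $$\ddot p_{\varepsilon,+}(\ell,z):=\Big(\delta_{z,0}-\frac{F_\varepsilon\{z_0+\xi_\ell-\xi_{\ell-z}\}}{F_\varepsilon\{z_0\}}\mathbf 1_{\{0,\dots,\ell\}}(z)\Big)\mathbf 1_{\mathbb{N}_0}(\ell),\qquad \ddot p_Y(\ell):=\frac{F_Y\{z_0+\xi_\ell\}}{F_\varepsilon\{z_0\}}\mathbf 1_{\mathbb{N}_0}(\ell)$$ for $\ell,z\in\mathbb{Z}$. Then $$p_X(\ell)=\sum_{z\in\mathbb{Z}}\ddot p_Y(\ell-z)\,\beta\{\ddot p_{\varepsilon,+}\}(\ell,z)\qquad(\ell\in\mathbb{Z}).$$ Moreover, if there exists $s>0$ with $\xi_\ell=\xi_0+s\ell$ for all $\ell\in\mathbb{N}_0$, then with $\ddot u_{\varepsilon,+}(z):=\ddot p_{\varepsilon,+}(z,z)$, $$F_X(\xi)=(\Theta\{\ddot p_Y\}*\Theta\{\gamma\{\ddot u_{\varepsilon,+}\}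\})\Big(\frac{\xi-\xi_0}{s}\Big)\qquad(\xi\in\mathbb{R}).$$
   Context: $F_B$ denotes the distribution function of a random variable $B$, $F_B\{x\}:=P(B=x)$, $F_B(x-):=P(B<x)$. $\delta_{z,0}=1$ if $z=0$, else $0$. For a double sequence $\ddot p(\ell,z)$ vanishing for $z<0$: $\ddot p^{*0}(\ell,z):=\delta_{z,0}$, $\ddot p^{*j}(\ell,z):=\sum_{z_1\in\mathbb{Z}}\ddot p(\ell,z_1)\ddot p^{*(j-1)}(\ell-z_1,z-z_1)$ for $j\ge1$, and $\beta\{\ddot p\}(\ell,z):=\sum_{j=0}^{z}\ddot p^{*j}(\ell,z)$ (empty sum $=0$). For a single sequence $\ddot u$ vanishing on negative integers: $\ddot u^{*0}(z):=\delta_{z,0}$, $\ddot u^{*j}(z):=\sum_y\ddot u(z-y)\ddot u^{*(j-1)}(y)$, $\gamma\{\ddot u\}(z):=\sum_{j=0}^z\ddot u^{*j}(z)$. For a sequence $p$ vanishing on negative integers, $\Theta\{p\}(\xi):=\sum_{z=-\infty}^{\lfloor\xi\rfloor}p(z)$, and for two such sequences $(\Theta\{p\}*\Theta\{q\})(x):=\sum_{z\in\mathbb{Z}}\Theta\{p\}(x-z)q(z)$ (the Stieltjes convolution, a finite sum). *)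

theory Defs
  imports "HOL-Probability.Probability"
begin

fun dconv_pow :: "(int \<Rightarrow> int \<Rightarrow> real) \<Rightarrow> nat \<Rightarrow> int \<Rightarrow> int \<Rightarrow> real" where
  "dconv_pow p 0 l z = (if z = 0 then 1 else 0)"
| "dconv_pow p (Suc j) l z = (\<Sum>\<^sub>\<infinity> z1::int. p l z1 * dconv_pow p j (l - z1) (z - z1))"

definition beta :: "(int \<Rightarrow> int \<Rightarrow> real) \<Rightarrow> int \<Rightarrow> int \<Rightarrow> real" where
  "beta p l z = (\<Sum>j\<in>{0..z}. dconv_pow p (nat j) l z)"

fun sconv_pow :: "(int \<Rightarrow> real) \<Rightarrow> nat \<Rightarrow> int \<Rightarrow> real" where
  "sconv_pow u 0 z = (if z = 0 then 1 else 0)"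
| "sconv_pow u (Suc j) z = (\<Sum>\<^sub>\<infinity> y::int. u (z - y) * sconv_pow u j y)"

definition gamma :: "(int \<Rightarrow> real) \<Rightarrow> int \<Rightarrow> real" where
  "gamma u z = (\<Sum>j\<in>{0..z}. sconv_pow u (nat j) z)"

definition Theta :: "(int \<Rightarrow> real) \<Rightarrow> real \<Rightarrow> real" where
  "Theta p x = (\<Sum>\<^sub>\<infinity> z\<in>{..\<lfloor>x\<rfloor>}. p z)"

definition stieltjes_conv :: "(int \<Rightarrow> real) \<Rightarrow> (int \<Rightarrow> real) \<Rightarrow> real \<Rightarrow> real" where
  "stieltjes_conv p q x = (\<Sum>\<^sub>\<infinity> z::int. Theta p (x - of_int z) * q z)"

end

theory Submission
  imports Defs
begin

(*
  Since eps >= z0 almost surely and X takes only the values xi_0 < xi_1 < ..., the atom of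
  Y = X + eps at z0 + xi_l is sum_{k <= l} F_X{xi_k} F_eps{z0 + xi_l - xi_k}.  Dividing by
  F_eps{z0} > 0 gives the triangular renewal equation
    p_X(l) = p_Y(l) + sum_{1 <= z <= l} p_{eps,+}(l, z) p_X(l - z),
  whose solution is obtained by unrolling it: the resolvent beta is the sum of the convolution
  powers of the kernel p_{eps,+}.  On a lattice xi_l = xi_0 + s l the kernel depends on z only,
  beta becomes gamma of u_{eps,+}, and summing p_X up to floor((x - xi_0) / s) turns the
  convolution into the Stieltjes convolution of the partial sums.
*)

lemma sum_atLeastAtMost_int_shift:
  fixes g :: "int \<Rightarrow> 'b::comm_monoid_add"
  shows "(\<Sum>z\<in>{a..b}. g (z - a)) = (\<Sum>w\<in>{0..b - a}. g w)"
  by (rule sum.reindex_bij_witness[where i="\<lambda>w. w + a" and j="\<lambda>z. z - a"]) auto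

lemma infsum_int_convolution_eq_sum:
  fixes f g :: "int \<Rightarrow> real"
  assumes "\<And>z. z < 0 \<Longrightarrow> f z = 0" and "\<And>z. z < 0 \<Longrightarrow> g z = 0"
  shows "(\<Sum>\<^sub>\<infinity>z. f (l - z) * g z) = (\<Sum>z\<in>{0..l}. f (l - z) * g z)"
proof -
  have "(\<Sum>\<^sub>\<infinity>z. f (l - z) * g z) = (\<Sum>\<^sub>\<infinity>z\<in>{0..l}. f (l - z) * g z)"
    by (rule infsum_cong_neutral) (auto simp: assms)
  then show ?thesis
    by simp
qed

lemma sum_convolution_eq_sum_partial_sums:
  fixes f g :: "int \<Rightarrow> 'b::comm_semiring_0"
  shows "(\<Sum>l\<in>{0..L}. \<Sum>z\<in>{0..l}. f (l - z) * g z) = (\<Sum>z\<in>{0..L}. (\<Sum>w\<in>{0..L - z}. f w) * g z)"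
proof -
  have "(\<Sum>l\<in>{0..L}. \<Sum>z\<in>{0..l}. f (l - z) * g z)
      = (\<Sum>l\<in>{0..L}. \<Sum>z\<in>{z. z \<in> {0..L} \<and> z \<le> l}. f (l - z) * g z)"
    by (intro sum.cong) auto
  also have "\<dots> = (\<Sum>z\<in>{0..L}. \<Sum>l\<in>{l. l \<in> {0..L} \<and> z \<le> l}. f (l - z) * g z)"
    by (rule sum.swap_restrict) auto
  also have "\<dots> = (\<Sum>z\<in>{0..L}. (\<Sum>l\<in>{z..L}. f (l - z)) * g z)"
    by (intro sum.cong) (auto simp: sum_distrib_right intro: sum.cong)
  finally show ?thesis
    by (simp add: sum_atLeastAtMost_int_shift)
qed

context
  fixes p :: "int \<Rightarrow> int \<Rightarrow> real"
  assumes p_nonpos_eq_0: "\<And>l z. z \<le> 0 \<Longrightarrow> p l z = 0"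
begin

lemma dconv_pow_eq_0: "z < int j \<Longrightarrow> dconv_pow p j l z = 0"
proof (induction j arbitrary: l z)
  case (Suc j)
  have "p l z1 * dconv_pow p j (l - z1) (z - z1) = 0" for z1
    using p_nonpos_eq_0[of z1 l] Suc.IH[of "z - z1" "l - z1"] Suc.prems by (cases "z1 \<le> 0") auto
  then show ?case
    by (simp add: infsum_0)
qed simp

lemma dconv_pow_Suc_eq_sum:
  "dconv_pow p (Suc j) l z = (\<Sum>z1\<in>{1..z}. p l z1 * dconv_pow p j (l - z1) (z - z1))"
proof -
  have "dconv_pow p (Suc j) l z = (\<Sum>\<^sub>\<infinity>z1\<in>{1..z}. p l z1 * dconv_pow p j (l - z1) (z - z1))"
    unfolding dconv_pow.simps
    by (rule infsum_cong_neutral) (auto simp: p_nonpos_eq_0 dconv_pow_eq_0)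
  then show ?thesis
    by simp
qed

lemma beta_eq_sum_dconv_pow: "z \<le> int N \<Longrightarrow> beta p l z = (\<Sum>j\<le>N. dconv_pow p j l z)"
proof -
  assume "z \<le> int N"
  then have "beta p l z = (\<Sum>j\<in>{j. j \<le> N \<and> int j \<le> z}. dconv_pow p j l z)"
    unfolding beta_def by (intro sum.reindex_bij_witness[where i=int and j=nat]) auto
  also have "\<dots> = (\<Sum>j\<le>N. dconv_pow p j l z)"
    by (rule sum.mono_neutral_left) (auto intro!: dconv_pow_eq_0)
  finally show ?thesis .
qed

lemma beta_recurrence:
  "beta p l z = (if z = 0 then 1 else 0) + (\<Sum>z1\<in>{1..z}. p l z1 * beta p (l - z1) (z - z1))"
proof -
  define N where "N = nat z"
  have "beta p l z = (\<Sum>j\<le>Suc N. dconv_pow p j l z)"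
    by (rule beta_eq_sum_dconv_pow) (simp add: N_def)
  also have "\<dots> = (if z = 0 then 1 else 0) + (\<Sum>j\<le>N. dconv_pow p (Suc j) l z)"
    by (simp only: sum.atMost_Suc_shift dconv_pow.simps(1))
  also have "(\<Sum>j\<le>N. dconv_pow p (Suc j) l z)
      = (\<Sum>z1\<in>{1..z}. p l z1 * (\<Sum>j\<le>N. dconv_pow p j (l - z1) (z - z1)))"
    unfolding dconv_pow_Suc_eq_sum by (simp add: sum_distrib_left sum.swap[of _ "{..N}"])
  also have "\<dots> = (\<Sum>z1\<in>{1..z}. p l z1 * beta p (l - z1) (z - z1))"
    by (intro sum.cong refl arg_cong2[where f=times] beta_eq_sum_dconv_pow[symmetric])
      (auto simp: N_def)
  finally show ?thesis .
qed

lemma beta_convolution_recurrence: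
  assumes l: "0 \<le> l"
  shows "(\<Sum>z\<in>{0..l}. q (l - z) * beta p l z)
    = q l + (\<Sum>z1\<in>{1..l}. p l z1 * (\<Sum>w\<in>{0..l - z1}. q (l - z1 - w) * beta p (l - z1) w))"
proof -
  have "(\<Sum>z\<in>{0..l}. q (l - z) * beta p l z)
      = (\<Sum>z\<in>{0..l}. if z = 0 then q l else 0)
        + (\<Sum>z\<in>{0..l}. \<Sum>z1\<in>{z1. z1 \<in> {1..l} \<and> z1 \<le> z}. q (l - z) * p l z1 * beta p (l - z1) (z - z1))"
    unfolding sum.distrib[symmetric]
  proof (intro sum.cong refl)
    fix z assume "z \<in> {0..l}"
    then have bounds: "{z1. z1 \<in> {1..l} \<and> z1 \<le> z} = {1..z}"
      by auto
    show "q (l - z) * beta p l z = (if z = 0 then q l else 0)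
        + (\<Sum>z1\<in>{z1. z1 \<in> {1..l} \<and> z1 \<le> z}. q (l - z) * p l z1 * beta p (l - z1) (z - z1))"
      unfolding bounds
      by (subst beta_recurrence) (cases "z = 0"; simp add: distrib_left sum_distrib_left mult.assoc)
  qed
  also have "(\<Sum>z\<in>{0..l}. if z = 0 then q l else 0) = q l"
    using l by simp
  also have "(\<Sum>z\<in>{0..l}. \<Sum>z1\<in>{z1. z1 \<in> {1..l} \<and> z1 \<le> z}. q (l - z) * p l z1 * beta p (l - z1) (z - z1))
      = (\<Sum>z1\<in>{1..l}. \<Sum>z\<in>{z. z \<in> {0..l} \<and> z1 \<le> z}. q (l - z) * p l z1 * beta p (l - z1) (z - z1))"
    by (rule sum.swap_restrict) auto
  also have "\<dots> = (\<Sum>z1\<in>{1..l}. p l z1 * (\<Sum>z\<in>{z1..l}. q (l - z1 - (z - z1)) * beta p (l - z1) (z - z1)))"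
    by (intro sum.cong refl) (auto simp: sum_distrib_left algebra_simps intro!: sum.cong)
  finally show ?thesis
    by (simp only: sum_atLeastAtMost_int_shift[where g="\<lambda>w. q (_ - w) * _ w"])
qed

lemma renewal_solution_eq_beta_convolution:
  assumes renewal: "\<And>l. 0 \<le> l \<Longrightarrow> r l = q l + (\<Sum>z\<in>{1..l}. p l z * r (l - z))"
    and "0 \<le> l"
  shows "r l = (\<Sum>z\<in>{0..l}. q (l - z) * beta p l z)"
  using \<open>0 \<le> l\<close>
proof (induction "nat l" arbitrary: l rule: less_induct)
  case less
  have "r (l - z1) = (\<Sum>w\<in>{0..l - z1}. q (l - z1 - w) * beta p (l - z1) w)" if "z1 \<in> {1..l}" for z1
    using less.hyps[of "l - z1"] that by auto
  then show ?case
    by (simp add: renewal[OF less.prems] beta_convolution_recurrence[OF less.prems])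
qed

end

context
  fixes p :: "int \<Rightarrow> int \<Rightarrow> real" and u :: "int \<Rightarrow> real"
  assumes p_nonpos_eq_0: "\<And>l z. z \<le> 0 \<Longrightarrow> p l z = 0"
    and u_neg_eq_0: "\<And>z. z < 0 \<Longrightarrow> u z = 0"
    and p_eq_u: "\<And>l z. 0 \<le> z \<Longrightarrow> z \<le> l \<Longrightarrow> p l z = u z"
begin

lemma sconv_pow_eq_0: "y < 0 \<Longrightarrow> sconv_pow u j y = 0"
proof (induction j arbitrary: y)
  case (Suc j)
  have "u (y - y') * sconv_pow u j y' = 0" for y'
    using Suc u_neg_eq_0 by (cases "y' < 0") auto
  then show ?case
    by (simp add: infsum_0)
qed simp

lemma dconv_pow_eq_sconv_pow: "0 \<le> z \<Longrightarrow> z \<le> l \<Longrightarrow> dconv_pow p j l z = sconv_pow u j z"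
proof (induction j arbitrary: l z)
  case (Suc j)
  have "sconv_pow u (Suc j) z = (\<Sum>\<^sub>\<infinity>z1. u z1 * sconv_pow u j (z - z1))"
    unfolding sconv_pow.simps
    by (rule infsum_reindex_bij_witness[where i="\<lambda>a. z - a" and j="\<lambda>a. z - a"]) auto
  also have "\<dots> = dconv_pow p (Suc j) l z"
    unfolding dconv_pow.simps
  proof (rule infsum_cong)
    fix z1
    consider "z1 < 0" | "z1 = 0" | "0 < z1" "z < z1" | "0 < z1" "z1 \<le> z"
      by linarith
    then show "u z1 * sconv_pow u j (z - z1) = p l z1 * dconv_pow p j (l - z1) (z - z1)"
    proof cases
      case 2
      then show ?thesis
        using p_eq_u[of 0 0] p_nonpos_eq_0[of 0 0] p_nonpos_eq_0[of 0 l] by simp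
    next
      case 3
      then show ?thesis
        using sconv_pow_eq_0[of "z - z1"] dconv_pow_eq_0[of p, OF p_nonpos_eq_0, of "z - z1" j] by simp
    next
      case 4
      then show ?thesis
        using p_eq_u[of z1 l] Suc.IH[of "z - z1" "l - z1"] Suc.prems by simp
    qed (simp add: u_neg_eq_0 p_nonpos_eq_0)
  qed
  finally show ?case
    by simp
qed simp

lemma beta_eq_gamma: "0 \<le> z \<Longrightarrow> z \<le> l \<Longrightarrow> beta p l z = gamma u z"
  unfolding beta_def gamma_def by (intro sum.cong refl dconv_pow_eq_sconv_pow) auto

end

lemma Theta_eq_sum:
  assumes "\<And>z. z < 0 \<Longrightarrow> p z = 0"
  shows "Theta p y = (\<Sum>w\<in>{0..\<lfloor>y\<rfloor>}. p w)"
proof -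
  have "Theta p y = (\<Sum>\<^sub>\<infinity>w\<in>{0..\<lfloor>y\<rfloor>}. p w)"
    unfolding Theta_def by (rule infsum_cong_neutral) (auto simp: assms)
  then show ?thesis
    by simp
qed

lemma stieltjes_conv_eq_sum:
  assumes p: "\<And>z. z < 0 \<Longrightarrow> p z = 0" and q: "\<And>z. z < 0 \<Longrightarrow> q z = 0"
  shows "stieltjes_conv p q x = (\<Sum>z\<in>{0..\<lfloor>x\<rfloor>}. (\<Sum>w\<in>{0..\<lfloor>x\<rfloor> - z}. p w) * q z)"
proof -
  define P where "P k = (\<Sum>w\<in>{0..k}. p w)" for k
  have "stieltjes_conv p q x = (\<Sum>\<^sub>\<infinity>z. P (\<lfloor>x\<rfloor> - z) * q z)"
    unfolding stieltjes_conv_def P_def by (simp add: Theta_eq_sum[OF p])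
  also have "\<dots> = (\<Sum>z\<in>{0..\<lfloor>x\<rfloor>}. P (\<lfloor>x\<rfloor> - z) * q z)"
    by (rule infsum_int_convolution_eq_sum) (auto simp: P_def q)
  finally show ?thesis
    unfolding P_def .
qed

lemma (in prob_space) prob_le_eq_sum_atoms:
  fixes X :: "'a \<Rightarrow> real" and xi :: "nat \<Rightarrow> real"
  assumes [measurable]: "X \<in> borel_measurable M"
    and "inj xi" and X_range: "AE \<omega> in M. X \<omega> \<in> range xi" and "finite {k. xi k \<le> x}"
  shows "\<P>(\<omega> in M. X \<omega> \<le> x) = (\<Sum>k\<in>{k. xi k \<le> x}. \<P>(\<omega> in M. X \<omega> = xi k))"
proof (rule prob_sum)
  show "AE \<omega> in M. (\<forall>k\<in>{k. xi k \<le> x}. X \<omega> = xi k \<longrightarrow> X \<omega> \<le> x)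
      \<and> (X \<omega> \<le> x \<longrightarrow> (\<exists>!k\<in>{k. xi k \<le> x}. X \<omega> = xi k))"
    using X_range by eventually_elim (auto simp: inj_eq[OF \<open>inj xi\<close>])
qed (use \<open>finite {k. xi k \<le> x}\<close> in auto)

lemma (in prob_space) indep_var_prob_eq_and:
  fixes X Y :: "'a \<Rightarrow> 'b::t1_space"
  assumes "indep_var borel X borel Y"
  shows "\<P>(\<omega> in M. X \<omega> = a \<and> Y \<omega> = b) = \<P>(\<omega> in M. X \<omega> = a) * \<P>(\<omega> in M. Y \<omega> = b)"
proof -
  have "prob ((\<lambda>\<omega>. (X \<omega>, Y \<omega>)) -` ({a} \<times> {b}) \<inter> space M)
      = prob (X -` {a} \<inter> space M) * prob (Y -` {b} \<inter> space M)"
    by (rule indep_varD[OF assms]) auto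
  then show ?thesis
    by (simp add: vimage_def Int_def conj_commute)
qed

lemma (in prob_space) prob_add_eq_discrete_convolution:
  fixes X eps :: "'a \<Rightarrow> real" and xi :: "nat \<Rightarrow> real"
  assumes [measurable]: "X \<in> borel_measurable M" "eps \<in> borel_measurable M"
    and indep: "indep_var borel X borel eps"
    and mono: "strict_mono xi"
    and X_range: "AE \<omega> in M. X \<omega> \<in> range xi"
    and eps_ge: "AE \<omega> in M. z0 \<le> eps \<omega>"
  shows "\<P>(\<omega> in M. X \<omega> + eps \<omega> = z0 + xi n)
    = (\<Sum>k\<le>n. \<P>(\<omega> in M. X \<omega> = xi k) * \<P>(\<omega> in M. eps \<omega> = z0 + xi n - xi k))"
proof -
  have "\<P>(\<omega> in M. X \<omega> + eps \<omega> = z0 + xi n)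
      = (\<Sum>k\<le>n. \<P>(\<omega> in M. X \<omega> = xi k \<and> eps \<omega> = z0 + xi n - xi k))"
  proof (rule prob_sum)
    show "AE \<omega> in M. (\<forall>k\<in>{..n}. X \<omega> = xi k \<and> eps \<omega> = z0 + xi n - xi k \<longrightarrow> X \<omega> + eps \<omega> = z0 + xi n)
        \<and> (X \<omega> + eps \<omega> = z0 + xi n \<longrightarrow> (\<exists>!k\<in>{..n}. X \<omega> = xi k \<and> eps \<omega> = z0 + xi n - xi k))"
      using X_range eps_ge
    proof eventually_elim
      case (elim \<omega>)
      then obtain m where m: "X \<omega> = xi m"
        by auto
      have "m \<le> n" if "X \<omega> + eps \<omega> = z0 + xi n"
        using that m elim(2) strict_mono_less_eq[OF mono, of m n] by linarith
      then show ?case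
        using m strict_mono_eq[OF mono] by auto
    qed
  qed auto
  then show ?thesis
    by (simp add: indep_var_prob_eq_and[OF indep])
qed

locale discrete_deconvolution = prob_space +
  fixes X eps :: "'a \<Rightarrow> real" and xi :: "nat \<Rightarrow> real" and z0 :: real
  assumes X_measurable: "X \<in> borel_measurable M"
    and eps_measurable: "eps \<in> borel_measurable M"
    and indep_X_eps: "indep_var borel X borel eps"
    and strict_mono_xi: "strict_mono xi"
    and X_in_range_xi: "\<P>(\<omega> in M. X \<omega> \<in> range xi) = 1"
    and eps_z0_pos: "\<P>(\<omega> in M. eps \<omega> = z0) > 0"
    and eps_below_z0: "\<P>(\<omega> in M. eps \<omega> < z0) = 0"
begin

lemmas [measurable] = X_measurable eps_measurable

definition Fe :: "real \<Rightarrow> real" where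
  "Fe t = \<P>(\<omega> in M. eps \<omega> = t)"

definition pX :: "int \<Rightarrow> real" where
  "pX l = (if 0 \<le> l then \<P>(\<omega> in M. X \<omega> = xi (nat l)) else 0)"

definition pplus :: "int \<Rightarrow> int \<Rightarrow> real" where
  "pplus l z = (if 0 \<le> l then
      (if z = 0 then 1 else 0)
      - (if 0 \<le> z \<and> z \<le> l then Fe (z0 + xi (nat l) - xi (nat (l - z))) / Fe z0 else 0)
    else 0)"

definition pY :: "int \<Rightarrow> real" where
  "pY l = (if 0 \<le> l then \<P>(\<omega> in M. X \<omega> + eps \<omega> = z0 + xi (nat l)) / Fe z0 else 0)"

definition uplus :: "int \<Rightarrow> real" where
  "uplus z = pplus z z"

lemma AE_X_in_range_xi: "AE \<omega> in M. X \<omega> \<in> range xi"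
  using AE_prob_1[OF X_in_range_xi] by eventually_elim auto

lemma AE_eps_ge_z0: "AE \<omega> in M. z0 \<le> eps \<omega>"
  using eps_below_z0 by (subst (asm) prob_Collect_eq_0) (auto simp: not_less)

lemma pplus_nonpos_eq_0: "z \<le> 0 \<Longrightarrow> pplus l z = 0"
  using eps_z0_pos by (auto simp: pplus_def Fe_def)

lemma pY_eq_sum:
  assumes "0 \<le> l"
  shows "pY l = (\<Sum>z\<in>{0..l}. ((if z = 0 then 1 else 0) - pplus l z) * pX (l - z))"
proof -
  obtain n where n: "l = int n"
    using assms nonneg_int_cases by blast
  have "Fe z0 * pY l = (\<Sum>k\<le>n. \<P>(\<omega> in M. X \<omega> = xi k) * Fe (z0 + xi n - xi k))"
    using eps_z0_pos
    by (simp add: pY_def n Fe_def prob_add_eq_discrete_convolution[OF X_measurable eps_measurable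
          indep_X_eps strict_mono_xi AE_X_in_range_xi AE_eps_ge_z0])
  also have "\<dots> = (\<Sum>z\<in>{0..l}. pX (l - z) * Fe (z0 + xi (nat l) - xi (nat (l - z))))"
    unfolding n pX_def
    by (rule sum.reindex_bij_witness[where i="\<lambda>z. nat (int n - z)" and j="\<lambda>k. int n - int k"]) auto
  also have "\<dots> = Fe z0 * (\<Sum>z\<in>{0..l}. ((if z = 0 then 1 else 0) - pplus l z) * pX (l - z))"
    using eps_z0_pos assms by (auto simp: sum_distrib_left pplus_def Fe_def intro!: sum.cong)
  finally show ?thesis
    using eps_z0_pos by (simp add: Fe_def)
qed

lemma pX_renewal:
  assumes "0 \<le> l"
  shows "pX l = pY l + (\<Sum>z\<in>{1..l}. pplus l z * pX (l - z))"
proof -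
  have "{0..l} = insert 0 {1..l}"
    using assms by auto
  then show ?thesis
    by (simp add: pY_eq_sum[OF assms] left_diff_distrib sum_subtractf pplus_nonpos_eq_0)
qed

theorem pX_eq_deconvolution: "pX l = (\<Sum>\<^sub>\<infinity>z. pY (l - z) * beta pplus l z)"
proof -
  have "(\<Sum>\<^sub>\<infinity>z. pY (l - z) * beta pplus l z) = (\<Sum>z\<in>{0..l}. pY (l - z) * beta pplus l z)"
    by (rule infsum_int_convolution_eq_sum) (auto simp: pY_def beta_def)
  also have "\<dots> = pX l"
    using renewal_solution_eq_beta_convolution[of pplus, OF pplus_nonpos_eq_0 pX_renewal]
    by (cases "0 \<le> l") (auto simp: pX_def)
  finally show ?thesis ..
qed

context
  fixes s :: real
  assumes s_pos: "s > 0" and xi_lattice: "\<And>l. xi l = xi 0 + s * real l"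
begin

lemma pplus_eq_uplus: "0 \<le> z \<Longrightarrow> z \<le> l \<Longrightarrow> pplus l z = uplus z"
  by (simp add: uplus_def pplus_def xi_lattice[of "nat _"] of_nat_diff algebra_simps)

lemma uplus_neg_eq_0: "z < 0 \<Longrightarrow> uplus z = 0"
  by (simp add: uplus_def pplus_def)

lemma pX_eq_gamma_convolution:
  assumes "0 \<le> l"
  shows "pX l = (\<Sum>z\<in>{0..l}. pY (l - z) * gamma uplus z)"
proof -
  have "pX l = (\<Sum>z\<in>{0..l}. pY (l - z) * beta pplus l z)"
    by (rule renewal_solution_eq_beta_convolution[of pplus, OF pplus_nonpos_eq_0 pX_renewal assms])
  also have "\<dots> = (\<Sum>z\<in>{0..l}. pY (l - z) * gamma uplus z)"
    using beta_eq_gamma[of pplus uplus, OF pplus_nonpos_eq_0 uplus_neg_eq_0 pplus_eq_uplus] by simp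
  finally show ?thesis .
qed

lemma cdf_X_eq_sum_pX: "\<P>(\<omega> in M. X \<omega> \<le> x) = (\<Sum>l\<in>{0..\<lfloor>(x - xi 0) / s\<rfloor>}. pX l)"
proof -
  define L where "L = \<lfloor>(x - xi 0) / s\<rfloor>"
  have "xi k \<le> x \<longleftrightarrow> real k \<le> (x - xi 0) / s" for k
    using s_pos by (simp add: xi_lattice[of k] pos_le_divide_eq mult.commute le_diff_eq add.commute)
  then have K: "{k. xi k \<le> x} = {k. int k \<le> L}"
    by (simp add: L_def le_floor_iff)
  have "finite {k. int k \<le> L}"
    by (rule finite_subset[of _ "{..nat L}"]) auto
  then have "\<P>(\<omega> in M. X \<omega> \<le> x) = (\<Sum>k\<in>{k. xi k \<le> x}. \<P>(\<omega> in M. X \<omega> = xi k))"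
    unfolding K[symmetric]
    by (intro prob_le_eq_sum_atoms X_measurable strict_mono_on_imp_inj_on[OF strict_mono_xi]
        AE_X_in_range_xi)
  also have "\<dots> = (\<Sum>l\<in>{0..L}. pX l)"
    unfolding K pX_def by (rule sum.reindex_bij_witness[where i=nat and j=int]) auto
  finally show ?thesis
    unfolding L_def .
qed

theorem cdf_X_eq_stieltjes_conv:
  "\<P>(\<omega> in M. X \<omega> \<le> x) = stieltjes_conv pY (gamma uplus) ((x - xi 0) / s)"
proof -
  define L where "L = \<lfloor>(x - xi 0) / s\<rfloor>"
  have "\<P>(\<omega> in M. X \<omega> \<le> x) = (\<Sum>l\<in>{0..L}. \<Sum>z\<in>{0..l}. pY (l - z) * gamma uplus z)"
    unfolding cdf_X_eq_sum_pX L_def by (intro sum.cong refl pX_eq_gamma_convolution) auto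
  also have "\<dots> = (\<Sum>z\<in>{0..L}. (\<Sum>w\<in>{0..L - z}. pY w) * gamma uplus z)"
    by (rule sum_convolution_eq_sum_partial_sums)
  also have "\<dots> = stieltjes_conv pY (gamma uplus) ((x - xi 0) / s)"
    unfolding L_def by (rule stieltjes_conv_eq_sum[symmetric]) (auto simp: pY_def gamma_def)
  finally show ?thesis .
qed

end

end

theorem corollary2:
  fixes M :: "'a measure" and X eps :: "'a \<Rightarrow> real" and xi :: "nat \<Rightarrow> real" and z0 :: real
  assumes "prob_space M"
    and "X \<in> borel_measurable M" and "eps \<in> borel_measurable M"
    and "prob_space.indep_var M borel X borel eps"
    and "strict_mono xi"
    and "\<P>(\<omega> in M. X \<omega> \<in> range xi) = 1"
    and "\<P>(\<omega> in M. X \<omega> = xi 0) > 0"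
    and "\<P>(\<omega> in M. eps \<omega> \<in> {t. \<P>(\<omega>' in M. eps \<omega>' = t) > 0}) = 1"
    and "\<P>(\<omega> in M. eps \<omega> = z0) > 0"
    and "\<P>(\<omega> in M. eps \<omega> < z0) = 0"
  shows
   "(let Y = (\<lambda>\<omega>. X \<omega> + eps \<omega>);
         Fe = (\<lambda>t. \<P>(\<omega> in M. eps \<omega> = t));
         pX = (\<lambda>l::int. if 0 \<le> l then \<P>(\<omega> in M. X \<omega> = xi (nat l)) else 0);
         pplus = (\<lambda>(l::int) (z::int). if 0 \<le> l then
                    (if z = 0 then 1 else 0)
                    - (if 0 \<le> z \<and> z \<le> l then Fe (z0 + xi (nat l) - xi (nat (l - z))) / Fe z0 else 0)
                  else 0);
         pY = (\<lambda>l::int. if 0 \<le> l then \<P>(\<omega> in M. Y \<omega> = z0 + xi (nat l)) / Fe z0 else 0);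
         uplus = (\<lambda>z::int. pplus z z)
     in (\<forall>l::int. pX l = (\<Sum>\<^sub>\<infinity> z::int. pY (l - z) * beta pplus l z))
      \<and> (\<forall>s>0. (\<forall>l. xi l = xi 0 + s * real l) \<longrightarrow>
           (\<forall>x::real. \<P>(\<omega> in M. X \<omega> \<le> x) = stieltjes_conv pY (gamma uplus) ((x - xi 0) / s))))"
proof -
  interpret discrete_deconvolution M X eps xi z0
    by (rule discrete_deconvolution.intro[OF assms(1)
          discrete_deconvolution_axioms.intro[OF assms(2-6,9,10)]])
  have "\<forall>l. pX l = (\<Sum>\<^sub>\<infinity>z. pY (l - z) * beta pplus l z)"
    using pX_eq_deconvolution by blast
  moreover have "\<forall>s>0. (\<forall>l. xi l = xi 0 + s * real l) \<longrightarrow>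
      (\<forall>x. \<P>(\<omega> in M. X \<omega> \<le> x) = stieltjes_conv pY (gamma uplus) ((x - xi 0) / s))"
    using cdf_X_eq_stieltjes_conv by blast
  ultimately show ?thesis
    unfolding Let_def pX_def[abs_def] pY_def[abs_def] uplus_def[abs_def] pplus_def[abs_def] Fe_def
    by (rule conjI)
qed

end
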